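(* Let $G=(V,E)$ be a finite simple graph and let $T\geq 1$ be an integer. If $(s,x,y,z)$ is a feasible solution of the Infection Model $\mathrm{IM}(G,T)$, then $C=\{v\in V\colon s_v=1\}$ is a zero forcing set of $G$ that is the initial set of some zero forcing game in $\mathcal{Z}(G,T)$, and $\mathrm{pt}(G,C)\leq z\leq T$.
   Context: Zero forcing: $n=|V|$, $N(u)$ is the neighborhood of $u$. Under the standard color change rule, a filled vertex $u$ can force a non-filled vertex $v$ if $v$ is the only non-filled neighbor of $u$. A zero forcing game on $G$ with initial set $C\subseteq V$ consists of sets $C^{(0)}=C^{[0]}=C$, sets $C^{(t)}$ (vertices forced at time step $t$) with $C^{[t]}=C^{[t-1]}\cup C^{(t)}$ for $t\geq1$, and a collection $\phi(C)$ of forces $u\to v$, such that every vertex lies in exactly one set $C^{(t)}$, and each $v\in C^{(t)}$ with $t\geq 1$ is forced by exactly one neighbor $u$ (recorded as $u\to v$ in $\phi(C)$) such that $u$ and all neighbors of $u$ other than $v$ lie in $C^{[t-1]}$. The closure of $C$ is the set of filled vertices once no more forces are possible; $C$ is a zero forcing set if its closure is $V$. The propagation time $\mathrm{pt}(G,C)$ is the smallest $t^*$ with $C^{[t^*]}=V$ when at each time step all possible forces are applied simultaneously (i.e. $C^{(t)}$ is the set of all $v\notin C^{[t-1]}$ for which some $u\in C^{[t-1]}$ has $v$ as its unique neighbor outside $C^{[t-1]}$), and $\mathrm{pt}(G,C)=\infty$ if $C$ is not a zero forcing set. $\mathcal{Z}(G,T)$ denotes the family of all zero forcing games on $G$ whose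 initial set is a zero forcing set and which use at most $T$ time steps. Infection Model: let $A$ be the set of arcs containing both $(u,v)$ and $(v,u)$ for each edge $\{u,v\}\in E$, and $[T]=\{1,\dots,T\}$. The model $\mathrm{IM}(G,T)$ has variables $s_v\in\{0,1\}$ and $x_v\in\{0,1,\dots,T\}$ for $v\in V$, $y_a\in\{0,1\}$ for $a\in A$, and $z\in\{0,1,\dots,T\}$, subject to: (i) $s_v+\sum_{a=(u,v)\in A}y_a=1$ for all $v\in V$; (ii) $x_u-x_v+(T+1)y_a\leq T$ for all $a=(u,v)\in A$; (iii) $x_w-x_v+(T+1)y_a\leq T$ for all $a=(u,v)\in A$ and $w\in N(u)\setminus\{v\}$; (iv) $x_v-z\leq 0$ for all $v\in V$. Its objective is to minimize $\sum_{v\in V}s_v$. A feasible solution is one satisfying all these constraints. *)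

theory Defs
  imports Main "HOL-Library.Extended_Nat"
begin

definition simple_graph :: "'a set \<Rightarrow> ('a \<Rightarrow> 'a \<Rightarrow> bool) \<Rightarrow> bool" where
  "simple_graph V E \<longleftrightarrow> finite V
     \<and> (\<forall>u v. E u v \<longrightarrow> u \<in> V \<and> v \<in> V)
     \<and> (\<forall>u v. E u v \<longrightarrow> E v u)
     \<and> (\<forall>u. \<not> E u u)"

definition nbhd :: "'a set \<Rightarrow> ('a \<Rightarrow> 'a \<Rightarrow> bool) \<Rightarrow> 'a \<Rightarrow> 'a set" where
  "nbhd V E u = {w \<in> V. E u w}"

definition arcs :: "'a set \<Rightarrow> ('a \<Rightarrow> 'a \<Rightarrow> bool) \<Rightarrow> ('a \<times> 'a) set" where
  "arcs V E = {(u, v). u \<in> V \<and> v \<in> V \<and> E u v}"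

inductive_set zf_closure :: "'a set \<Rightarrow> ('a \<Rightarrow> 'a \<Rightarrow> bool) \<Rightarrow> 'a set \<Rightarrow> 'a set"
  for V E C where
  init: "v \<in> C \<Longrightarrow> v \<in> zf_closure V E C"
| force: "u \<in> zf_closure V E C \<Longrightarrow> v \<in> nbhd V E u \<Longrightarrow>
          (\<And>w. w \<in> nbhd V E u \<Longrightarrow> w \<noteq> v \<Longrightarrow> w \<in> zf_closure V E C) \<Longrightarrow>
          v \<in> zf_closure V E C"

definition zero_forcing_set :: "'a set \<Rightarrow> ('a \<Rightarrow> 'a \<Rightarrow> bool) \<Rightarrow> 'a set \<Rightarrow> bool" where
  "zero_forcing_set V E C \<longleftrightarrow> C \<subseteq> V \<and> zf_closure V E C = V"

definition cum :: "(nat \<Rightarrow> 'a set) \<Rightarrow> nat \<Rightarrow> 'a set" where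
  "cum Ct t = (\<Union>i\<le>t. Ct i)"

definition zf_game :: "'a set \<Rightarrow> ('a \<Rightarrow> 'a \<Rightarrow> bool) \<Rightarrow> 'a set
     \<Rightarrow> (nat \<Rightarrow> 'a set) \<Rightarrow> ('a \<times> 'a) set \<Rightarrow> bool" where
  "zf_game V E C Ct phi \<longleftrightarrow>
     Ct 0 = C
   \<and> (\<forall>t. Ct t \<subseteq> V)
   \<and> (\<forall>v\<in>V. \<exists>!t. v \<in> Ct t)
   \<and> phi \<subseteq> {(u, v). E u v \<and> (\<exists>t\<ge>1. v \<in> Ct t)}
   \<and> (\<forall>t\<ge>1. \<forall>v\<in>Ct t. \<exists>!u. (u, v) \<in> phi \<and> u \<in> nbhd V E v
         \<and> u \<in> cum Ct (t - 1) \<and> nbhd V E u - {v} \<subseteq> cum Ct (t - 1))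
   \<and> (\<forall>t\<ge>1. \<forall>v\<in>Ct t. \<forall>u. (u, v) \<in> phi \<longrightarrow>
         u \<in> cum Ct (t - 1) \<and> nbhd V E u - {v} \<subseteq> cum Ct (t - 1))"

definition in_ZGT :: "'a set \<Rightarrow> ('a \<Rightarrow> 'a \<Rightarrow> bool) \<Rightarrow> nat
     \<Rightarrow> 'a set \<Rightarrow> (nat \<Rightarrow> 'a set) \<Rightarrow> ('a \<times> 'a) set \<Rightarrow> bool" where
  "in_ZGT V E T C Ct phi \<longleftrightarrow> zero_forcing_set V E C \<and> zf_game V E C Ct phi
     \<and> (\<forall>t>T. Ct t = {})"

definition pt_step :: "'a set \<Rightarrow> ('a \<Rightarrow> 'a \<Rightarrow> bool) \<Rightarrow> 'a set \<Rightarrow> 'a set" where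
  "pt_step V E S = S \<union> {v \<in> V - S. \<exists>u\<in>S. nbhd V E u - S = {v}}"

definition prop_time :: "'a set \<Rightarrow> ('a \<Rightarrow> 'a \<Rightarrow> bool) \<Rightarrow> 'a set \<Rightarrow> enat" where
  "prop_time V E C = (if \<exists>t. (pt_step V E ^^ t) C = V
     then enat (LEAST t. (pt_step V E ^^ t) C = V) else \<infinity>)"

definition IM_feasible :: "'a set \<Rightarrow> ('a \<Rightarrow> 'a \<Rightarrow> bool) \<Rightarrow> nat
     \<Rightarrow> ('a \<Rightarrow> int) \<Rightarrow> ('a \<Rightarrow> int) \<Rightarrow> ('a \<times> 'a \<Rightarrow> int) \<Rightarrow> int \<Rightarrow> bool" where
  "IM_feasible V E T s x y z \<longleftrightarrow>
     (\<forall>v\<in>V. s v \<in> {0, 1})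
   \<and> (\<forall>v\<in>V. x v \<in> {0..int T})
   \<and> (\<forall>a\<in>arcs V E. y a \<in> {0, 1})
   \<and> z \<in> {0..int T}
   \<and> (\<forall>v\<in>V. s v + (\<Sum>a\<in>{a \<in> arcs V E. snd a = v}. y a) = 1)
   \<and> (\<forall>(u, v)\<in>arcs V E. x u - x v + (int T + 1) * y (u, v) \<le> int T)
   \<and> (\<forall>(u, v)\<in>arcs V E. \<forall>w\<in>nbhd V E u - {v}.
         x w - x v + (int T + 1) * y (u, v) \<le> int T)
   \<and> (\<forall>v\<in>V. x v - z \<le> 0)"

end

theory Submission
  imports Defs
begin

text \<open>The arcs with y = 1 say who infects whom, and x is a time stamp: constraint (i) gives
  every non-initial vertex an infecting in-neighbour u, and (ii), (iii) say that u and all other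
  neighbours of u carry strictly smaller stamps. Such a parent map together with a time stamp
  is all that is needed: forcing each vertex at its stamp by its parent is a valid zero forcing
  game, the closure contains every vertex by induction on the stamp, and after t rounds of
  simultaneous forcing every vertex with stamp at most t is filled.\<close>

definition forcing_schedule ::
    "'a set \<Rightarrow> ('a \<Rightarrow> 'a \<Rightarrow> bool) \<Rightarrow> 'a set \<Rightarrow> ('a \<Rightarrow> nat) \<Rightarrow> ('a \<Rightarrow> 'a) \<Rightarrow> bool" where
  "forcing_schedule V E C f p \<longleftrightarrow> C \<subseteq> V \<and>
     (\<forall>v\<in>V - C. p v \<in> V \<and> v \<in> nbhd V E (p v) \<and> f (p v) < f v
        \<and> (\<forall>w\<in>nbhd V E (p v) - {v}. f w < f v))"

lemma forcing_scheduleD: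
  assumes "forcing_schedule V E C f p" "v \<in> V" "v \<notin> C"
  shows "p v \<in> V" "v \<in> nbhd V E (p v)" "f (p v) < f v"
    and "\<And>w. w \<in> nbhd V E (p v) \<Longrightarrow> w \<noteq> v \<Longrightarrow> f w < f v"
  using assms unfolding forcing_schedule_def by auto

lemma forcing_schedule_pos:
  assumes "forcing_schedule V E C f p" "v \<in> V" "v \<notin> C"
  shows "0 < f v"
  using forcing_scheduleD(3)[OF assms] by simp

lemma forcing_schedule_subset: "forcing_schedule V E C f p \<Longrightarrow> C \<subseteq> V"
  unfolding forcing_schedule_def by simp

lemma in_nbhdD: "w \<in> nbhd V E u \<Longrightarrow> w \<in> V"
  unfolding nbhd_def by simp

lemma zero_forcing_set_if_forcing_schedule:
  assumes sched: "forcing_schedule V E C f p"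
  shows "zero_forcing_set V E C"
proof -
  have "v \<in> zf_closure V E C" if "v \<in> V" for v
    using that
  proof (induction "f v" arbitrary: v rule: less_induct)
    case less
    show ?case
    proof (cases "v \<in> C")
      case True
      then show ?thesis by (rule zf_closure.init)
    next
      case False
      note parent = forcing_scheduleD[OF sched less.prems False]
      show ?thesis
      proof (rule zf_closure.force[where u = "p v"])
        show "p v \<in> zf_closure V E C"
          by (rule less.hyps[OF parent(3,1)])
        show "v \<in> nbhd V E (p v)"
          by (rule parent(2))
        show "w \<in> zf_closure V E C" if "w \<in> nbhd V E (p v)" "w \<noteq> v" for w
          using less.hyps parent(4)[OF that] that(1) by (simp add: nbhd_def)
      qed
    qed
  qed
  moreover have "zf_closure V E C \<subseteq> V"
  proof
    fix v assume "v \<in> zf_closure V E C"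
    then show "v \<in> V"
    proof cases
      case init
      then show ?thesis
        using forcing_schedule_subset[OF sched] by blast
    next
      case (force u)
      show ?thesis
        using force(2) by (rule in_nbhdD)
    qed
  qed
  ultimately show ?thesis
    using forcing_schedule_subset[OF sched] unfolding zero_forcing_set_def by blast
qed

lemma pt_step_superset: "S \<subseteq> pt_step V E S"
  unfolding pt_step_def by (rule Un_upper1)

lemma pt_step_force:
  assumes "u \<in> S" "nbhd V E u - S = {v}"
  shows "v \<in> pt_step V E S"
proof -
  have "v \<in> nbhd V E u" "v \<notin> S"
    using assms(2) by blast+
  then have "v \<in> V - S"
    using in_nbhdD by simp
  with assms show ?thesis
    unfolding pt_step_def by blast
qed

lemma pt_step_iterate_subset:
  "C \<subseteq> V \<Longrightarrow> (pt_step V E ^^ t) C \<subseteq> V"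
  by (induction t) (auto simp: pt_step_def)

lemma pt_step_iterate_superset: "C \<subseteq> (pt_step V E ^^ t) C"
  by (induction t) (auto simp: pt_step_def)

lemma pt_step_iterate_forcing_schedule:
  assumes sched: "forcing_schedule V E C f p"
  shows "{v \<in> V. f v \<le> t} \<subseteq> (pt_step V E ^^ t) C"
proof (induction t)
  case 0
  have "v \<in> C" if "v \<in> V" "f v = 0" for v
    using forcing_schedule_pos[OF sched that(1)] that(2) by auto
  then show ?case by auto
next
  case (Suc t)
  define S where "S = (pt_step V E ^^ t) C"
  have earlier: "w \<in> S" if "w \<in> V" "f w < Suc t" for w
    using Suc.IH that unfolding S_def by auto
  show ?case
  proof
    fix v assume "v \<in> {v \<in> V. f v \<le> Suc t}"
    then have v: "v \<in> V" "f v \<le> Suc t" by simp_all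
    show "v \<in> (pt_step V E ^^ Suc t) C"
    proof (cases "v \<in> S")
      case True
      then show ?thesis
        using pt_step_superset[of S V E] by (auto simp: S_def)
    next
      case False
      then have "v \<notin> C"
        using pt_step_iterate_superset[where C = C and t = t] unfolding S_def by blast
      note parent = forcing_scheduleD[OF sched v(1) this]
      have "\<not> f v < Suc t"
        using earlier[OF v(1)] False by blast
      with v(2) have "f v = Suc t"
        by simp
      have "p v \<in> S"
        using earlier parent(1,3) \<open>f v = Suc t\<close> by simp
      moreover have "nbhd V E (p v) - S = {v}"
      proof
        show "nbhd V E (p v) - S \<subseteq> {v}"
        proof
          fix w assume "w \<in> nbhd V E (p v) - S"
          then have w: "w \<in> nbhd V E (p v)" "w \<notin> S"
            by simp_all
          show "w \<in> {v}"
          proof (rule ccontr)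
            assume "w \<notin> {v}"
            then have "f w < Suc t"
              using parent(4)[OF w(1)] \<open>f v = Suc t\<close> by simp
            then show False
              using earlier[OF in_nbhdD[OF w(1)]] w(2) by blast
          qed
        qed
        show "{v} \<subseteq> nbhd V E (p v) - S"
          using parent(2) False by blast
      qed
      ultimately show ?thesis
        unfolding S_def by (simp add: pt_step_force)
    qed
  qed
qed

lemma prop_time_le_if_forcing_schedule:
  assumes sched: "forcing_schedule V E C f p" and bound: "\<forall>v\<in>V. f v \<le> k"
  shows "prop_time V E C \<le> enat k"
proof -
  have "V \<subseteq> (pt_step V E ^^ k) C"
    using pt_step_iterate_forcing_schedule[OF sched, of k] bound by auto
  then have full: "(pt_step V E ^^ k) C = V"
    by (rule subset_antisym[OF pt_step_iterate_subset[OF forcing_schedule_subset[OF sched]]])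
  then have "(LEAST t. (pt_step V E ^^ t) C = V) \<le> k"
    by (rule Least_le)
  then show ?thesis
    unfolding prop_time_def using full by auto
qed

definition schedule_rounds :: "'a set \<Rightarrow> 'a set \<Rightarrow> ('a \<Rightarrow> nat) \<Rightarrow> nat \<Rightarrow> 'a set" where
  "schedule_rounds V C f t = (if t = 0 then C else {v \<in> V - C. f v = t})"

definition schedule_forces :: "'a set \<Rightarrow> 'a set \<Rightarrow> ('a \<Rightarrow> 'a) \<Rightarrow> ('a \<times> 'a) set" where
  "schedule_forces V C p = {(p v, v) | v. v \<in> V - C}"

lemma schedule_forces_iff: "(u, v) \<in> schedule_forces V C p \<longleftrightarrow> v \<in> V - C \<and> u = p v"
  unfolding schedule_forces_def by blast

lemma cum_schedule_rounds:
  assumes sched: "forcing_schedule V E C f p" and "w \<in> V" "f w \<le> t"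
  shows "w \<in> cum (schedule_rounds V C f) t"
proof (cases "w \<in> C")
  case True
  then have "w \<in> schedule_rounds V C f 0"
    unfolding schedule_rounds_def by simp
  then show ?thesis
    unfolding cum_def by (rule UN_I[rotated]) simp
next
  case False
  then have "w \<in> schedule_rounds V C f (f w)"
    using forcing_schedule_pos[OF sched assms(2) False] assms(2) False
    unfolding schedule_rounds_def by simp
  then show ?thesis
    unfolding cum_def using assms(3) by (intro UN_I[rotated]) simp_all
qed

lemma zf_game_forcing_schedule:
  assumes sched: "forcing_schedule V E C f p" and sym: "\<forall>u v. E u v \<longrightarrow> E v u"
  shows "zf_game V E C (schedule_rounds V C f) (schedule_forces V C p)"
proof -
  let ?Ct = "schedule_rounds V C f" and ?phi = "schedule_forces V C p"
  have round: "v \<in> V" "v \<notin> C" "f v = t" if "1 \<le> t" "v \<in> ?Ct t" for v t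
    using that unfolding schedule_rounds_def by (simp_all split: if_splits)
  have own_round: "v \<in> ?Ct (f v)" "1 \<le> f v" if "v \<in> V" "v \<notin> C" for v
    using forcing_schedule_pos[OF sched that] that unfolding schedule_rounds_def by simp_all
  have parent_ready: "p v \<in> nbhd V E v \<and> p v \<in> cum ?Ct (t - 1)
      \<and> nbhd V E (p v) - {v} \<subseteq> cum ?Ct (t - 1)" if "1 \<le> t" "v \<in> ?Ct t" for v t
  proof (intro conjI)
    note parent = forcing_scheduleD[OF sched round(1,2)[OF that]]
    have "E v (p v)"
      using parent(2) sym unfolding nbhd_def by blast
    then show "p v \<in> nbhd V E v"
      using parent(1) unfolding nbhd_def by blast
    show "p v \<in> cum ?Ct (t - 1)"
      using parent(3) round(3)[OF that] by (intro cum_schedule_rounds[OF sched parent(1)]) simp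
    show "nbhd V E (p v) - {v} \<subseteq> cum ?Ct (t - 1)"
    proof
      fix w assume "w \<in> nbhd V E (p v) - {v}"
      then have w: "w \<in> V" "f w < t"
        using in_nbhdD[of w] parent(4)[of w] round(3)[OF that] by auto
      then show "w \<in> cum ?Ct (t - 1)"
        by (intro cum_schedule_rounds[OF sched w(1)]) simp
    qed
  qed
  have unique_round: "\<exists>!t. v \<in> ?Ct t" if "v \<in> V" for v
  proof (cases "v \<in> C")
    case True
    show ?thesis
    proof (rule ex1I[of _ 0])
      show "v \<in> ?Ct 0"
        using True unfolding schedule_rounds_def by simp
      show "t = 0" if "v \<in> ?Ct t" for t
        using that True unfolding schedule_rounds_def by (simp split: if_splits)
    qed
  next
    case False
    show ?thesis
    proof (rule ex1I[of _ "f v"])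
      show "v \<in> ?Ct (f v)"
        using own_round(1)[OF \<open>v \<in> V\<close> False] .
      show "t = f v" if "v \<in> ?Ct t" for t
        using that False unfolding schedule_rounds_def by (simp split: if_splits)
    qed
  qed
  have forces_rounds: "?phi \<subseteq> {(u, v). E u v \<and> (\<exists>t\<ge>1. v \<in> ?Ct t)}"
  proof
    fix a assume "a \<in> ?phi"
    then obtain v where a: "a = (p v, v)" "v \<in> V" "v \<notin> C"
      unfolding schedule_forces_def by blast
    have "E (p v) v"
      using forcing_scheduleD(2)[OF sched a(2,3)] unfolding nbhd_def by simp
    with own_round[OF a(2,3)] show "a \<in> {(u, v). E u v \<and> (\<exists>t\<ge>1. v \<in> ?Ct t)}"
      using a(1) by blast
  qed
  show ?thesis
    unfolding zf_game_def
  proof (intro conjI allI impI ballI)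
    show "?Ct 0 = C"
      unfolding schedule_rounds_def by simp
    show "?Ct t \<subseteq> V" for t
      using forcing_schedule_subset[OF sched] unfolding schedule_rounds_def by auto
    show "\<exists>!t. v \<in> ?Ct t" if "v \<in> V" for v
      using that by (rule unique_round)
    show "?phi \<subseteq> {(u, v). E u v \<and> (\<exists>t\<ge>1. v \<in> ?Ct t)}"
      by (rule forces_rounds)
    show "\<exists>!u. (u, v) \<in> ?phi \<and> u \<in> nbhd V E v \<and> u \<in> cum ?Ct (t - 1)
        \<and> nbhd V E u - {v} \<subseteq> cum ?Ct (t - 1)" if "1 \<le> t" "v \<in> ?Ct t" for t v
    proof (rule ex1I[of _ "p v"])
      show "(p v, v) \<in> ?phi \<and> p v \<in> nbhd V E v \<and> p v \<in> cum ?Ct (t - 1)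
          \<and> nbhd V E (p v) - {v} \<subseteq> cum ?Ct (t - 1)"
        using parent_ready[OF that] round(1,2)[OF that] by (simp add: schedule_forces_iff)
      show "u = p v" if "(u, v) \<in> ?phi \<and> u \<in> nbhd V E v \<and> u \<in> cum ?Ct (t - 1)
          \<and> nbhd V E u - {v} \<subseteq> cum ?Ct (t - 1)" for u
        using that by (simp add: schedule_forces_iff)
    qed
    show "u \<in> cum ?Ct (t - 1)" "nbhd V E u - {v} \<subseteq> cum ?Ct (t - 1)"
      if "1 \<le> t" "v \<in> ?Ct t" "(u, v) \<in> ?phi" for t v u
    proof -
      have "u = p v"
        using that(3) by (simp add: schedule_forces_iff)
      then show "u \<in> cum ?Ct (t - 1)" "nbhd V E u - {v} \<subseteq> cum ?Ct (t - 1)"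
        using parent_ready[OF that(1,2)] by simp_all
    qed
  qed
qed

lemma in_ZGT_forcing_schedule:
  assumes sched: "forcing_schedule V E C f p" and sym: "\<forall>u v. E u v \<longrightarrow> E v u"
    and bound: "\<forall>v\<in>V. f v \<le> T"
  shows "in_ZGT V E T C (schedule_rounds V C f) (schedule_forces V C p)"
proof -
  have "schedule_rounds V C f t = {}" if "T < t" for t
  proof -
    have "v \<notin> schedule_rounds V C f t" for v
      using bound that unfolding schedule_rounds_def by auto
    then show ?thesis
      by blast
  qed
  then show ?thesis
    unfolding in_ZGT_def
    using zero_forcing_set_if_forcing_schedule[OF sched] zf_game_forcing_schedule[OF sched sym]
    by blast
qed

lemma IM_feasible_infector:
  assumes feasible: "IM_feasible V E T s x y z" and "v \<in> V" "s v \<noteq> 1"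
  obtains u where "(u, v) \<in> arcs V E" "y (u, v) = 1"
proof -
  have "s v = 0" "s v + (\<Sum>a\<in>{a \<in> arcs V E. snd a = v}. y a) = 1"
    using feasible assms(2,3) unfolding IM_feasible_def by auto
  then have "(\<Sum>a\<in>{a \<in> arcs V E. snd a = v}. y a) \<noteq> 0"
    by simp
  then obtain a where a: "a \<in> arcs V E" "snd a = v" "y a \<noteq> 0"
    by (rule sum.not_neutral_contains_not_neutral) blast
  then have "y a = 1"
    using feasible unfolding IM_feasible_def by blast
  with a show ?thesis
    using that[of "fst a"] by auto
qed

lemma IM_feasible_infection_order:
  assumes feasible: "IM_feasible V E T s x y z"
    and arc: "(u, v) \<in> arcs V E" and active: "y (u, v) = 1"
  shows "x u < x v" and "\<And>w. w \<in> nbhd V E u \<Longrightarrow> w \<noteq> v \<Longrightarrow> x w < x v"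
proof -
  have "x u - x v + (int T + 1) * y (u, v) \<le> int T"
    using feasible arc unfolding IM_feasible_def by blast
  then show "x u < x v"
    using active by simp
  show "x w < x v" if "w \<in> nbhd V E u" "w \<noteq> v" for w
  proof -
    have "x w - x v + (int T + 1) * y (u, v) \<le> int T"
      using feasible arc that unfolding IM_feasible_def by blast
    then show ?thesis
      using active by simp
  qed
qed

lemma IM_feasible_forcing_schedule:
  assumes feasible: "IM_feasible V E T s x y z"
  shows "forcing_schedule V E {v \<in> V. s v = 1} (\<lambda>v. nat (x v))
           (\<lambda>v. SOME u. (u, v) \<in> arcs V E \<and> y (u, v) = 1)"
  unfolding forcing_schedule_def
proof (intro conjI ballI)
  have stamps_nonneg: "0 \<le> x w" if "w \<in> V" for w
    using feasible that unfolding IM_feasible_def by auto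
  show "{v \<in> V. s v = 1} \<subseteq> V"
    by blast
  fix v assume v: "v \<in> V - {v \<in> V. s v = 1}"
  let ?u = "SOME u. (u, v) \<in> arcs V E \<and> y (u, v) = 1"
  obtain u0 where "(u0, v) \<in> arcs V E \<and> y (u0, v) = 1"
    using IM_feasible_infector[OF feasible] v by blast
  then have "(?u, v) \<in> arcs V E \<and> y (?u, v) = 1"
    by (rule someI)
  then have arc: "(?u, v) \<in> arcs V E" and active: "y (?u, v) = 1"
    by simp_all
  show "?u \<in> V" "v \<in> nbhd V E ?u"
    using arc unfolding arcs_def nbhd_def by auto
  show "nat (x ?u) < nat (x v)"
    using IM_feasible_infection_order(1)[OF feasible arc active] stamps_nonneg[OF \<open>?u \<in> V\<close>]
    by simp
  show "nat (x w) < nat (x v)" if "w \<in> nbhd V E ?u - {v}" for w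
  proof -
    have "x w < x v"
      using IM_feasible_infection_order(2)[OF feasible arc active, of w] that by simp
    moreover have "0 \<le> x w"
      using that by (intro stamps_nonneg in_nbhdD[of w V E ?u]) simp
    ultimately show ?thesis
      by simp
  qed
qed

theorem theorem3p1:
  fixes V :: "'a set" and E :: "'a \<Rightarrow> 'a \<Rightarrow> bool" and T :: nat
    and s x :: "'a \<Rightarrow> int" and y :: "'a \<times> 'a \<Rightarrow> int" and z :: int
  assumes "simple_graph V E"
    and "T \<ge> 1"
    and "IM_feasible V E T s x y z"
  shows "zero_forcing_set V E {v \<in> V. s v = 1}
       \<and> (\<exists>Ct phi. in_ZGT V E T {v \<in> V. s v = 1} Ct phi)
       \<and> prop_time V E {v \<in> V. s v = 1} \<le> enat (nat z)
       \<and> z \<le> int T"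
proof -
  note sched = IM_feasible_forcing_schedule[OF assms(3)]
  have sym: "\<forall>u v. E u v \<longrightarrow> E v u"
    using assms(1) unfolding simple_graph_def by blast
  have z_le_T: "z \<le> int T" and "\<forall>v\<in>V. 0 \<le> x v \<and> x v \<le> z"
    using assms(3) unfolding IM_feasible_def by auto
  then have "\<forall>v\<in>V. nat (x v) \<le> nat z" "\<forall>v\<in>V. nat (x v) \<le> T"
    by auto
  then show ?thesis
    using zero_forcing_set_if_forcing_schedule[OF sched] in_ZGT_forcing_schedule[OF sched sym]
      prop_time_le_if_forcing_schedule[OF sched] z_le_T by blast
qed

end
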